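(* Let $q=p^k$ for a prime $p \neq 3$, and let $G=\mathrm{PSL}(2,q)$ be considered as a permutation group in its transitive action on the left cosets of a subgroup isomorphic to $\mathbb{Z}_3$. Then a non-canonical basic intersecting set in $G$ contains no point stabilizer as a proper subset.
   Context: For a permutation group $G$ on a finite set $V$, a subset $\mathcal{F}\subseteq G$ is intersecting if for all $g,h\in\mathcal{F}$ there is $v\in V$ with $g(v)=h(v)$. A canonical intersecting set is a coset $gG_v$ of a point stabilizer ($g\in G$, $v\in V$). A basic intersecting set is an intersecting set containing the identity. *)

theory Defs
  imports "HOL-Analysis.Analysis" "HOL-Algebra.Left_Coset" "HOL-Library.Numeral_Type"
begin

definition SL2 :: "('a::field ^ 2 ^ 2) monoid" where
  "SL2 = \<lparr>carrier = {A. det A = 1}, mult = (**), one = mat 1\<rparr>"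

definition PSL2 :: "('a::field ^ 2 ^ 2) set monoid" where
  "PSL2 = SL2 Mod {mat 1, - mat 1}"

definition coset_stab :: "('g, 'b) monoid_scheme \<Rightarrow> 'g set \<Rightarrow> 'g set" where
  "coset_stab G v = {g \<in> carrier G. g <#\<^bsub>G\<^esub> v = v}"

definition intersecting_set :: "('g, 'b) monoid_scheme \<Rightarrow> 'g set \<Rightarrow> 'g set \<Rightarrow> bool" where
  "intersecting_set G H F \<longleftrightarrow> F \<subseteq> carrier G \<and>
     (\<forall>g\<in>F. \<forall>h\<in>F. \<exists>v \<in> lcosets\<^bsub>G\<^esub> H. g <#\<^bsub>G\<^esub> v = h <#\<^bsub>G\<^esub> v)"

definition canonical_intersecting_set :: "('g, 'b) monoid_scheme \<Rightarrow> 'g set \<Rightarrow> 'g set \<Rightarrow> bool" where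
  "canonical_intersecting_set G H F \<longleftrightarrow>
     (\<exists>g\<in>carrier G. \<exists>v \<in> lcosets\<^bsub>G\<^esub> H. F = g <#\<^bsub>G\<^esub> coset_stab G v)"

definition basic_intersecting_set :: "('g, 'b) monoid_scheme \<Rightarrow> 'g set \<Rightarrow> 'g set \<Rightarrow> bool" where
  "basic_intersecting_set G H F \<longleftrightarrow> intersecting_set G H F \<and> \<one>\<^bsub>G\<^esub> \<in> F"

end

theory Submission
  imports Defs "HOL-Number_Theory.Residues"
begin

text \<open>
  A point stabilizer is a conjugate of \<open>H\<close>, so it has order 3, and for \<open>g, g'\<close> in an
  intersecting set the quotient \<open>g'\<^sup>-\<^sup>1 g\<close> fixes a point and therefore has order dividing 3.
  If a stabilizer \<open>S\<close> were a proper subset of an intersecting set \<open>F\<close>, then for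
  \<open>1 \<noteq> u \<in> S\<close> and \<open>f \<in> F - S\<close> the four elements \<open>u, f, uf, u\<^sup>2f\<close> would all have
  order 3. Lift \<open>u, f\<close> to matrices \<open>W, X \<in> SL(2,q)\<close>: an element of order 3 in
  \<open>PSL(2,q)\<close> lifts to a matrix of trace \<open>\<plusminus>1\<close>, and the identity
  \<open>tr(W\<^sup>2X) = tr W tr(WX) - tr X\<close> together with four traces \<open>\<plusminus>1\<close> forces \<open>3 = 0\<close>,
  i.e. \<open>p = 3\<close>.
\<close>

lemma (in group) inv_mult_cancel_left:
  "x \<in> carrier G \<Longrightarrow> y \<in> carrier G \<Longrightarrow> inv x \<otimes> (x \<otimes> y) = y"
  by (simp add: m_assoc[symmetric])

lemma (in group) mult_inv_cancel_left:
  "x \<in> carrier G \<Longrightarrow> y \<in> carrier G \<Longrightarrow> x \<otimes> (inv x \<otimes> y) = y"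
  by (simp add: m_assoc[symmetric])

lemma (in group) coset_stab_lcos:
  assumes H: "subgroup H G" and x: "x \<in> carrier G"
  shows "coset_stab G (x <# H) = (\<lambda>h. x \<otimes> h \<otimes> inv x) ` H"
proof -
  have Hc: "H \<subseteq> carrier G" using H subgroup.subset by blast
  have fixes_iff: "g <# (x <# H) = x <# H \<longleftrightarrow> inv x \<otimes> g \<otimes> x \<in> H" if g: "g \<in> carrier G" for g
  proof -
    have "g <# (x <# H) = (g \<otimes> x) <# H" using lcos_m_assoc[OF Hc g x] .
    also have "\<dots> = x <# H \<longleftrightarrow> g \<otimes> x \<in> x <# H"
      using lcos_self[OF _ H] l_repr_independence[OF _ x H] g x by (metis m_closed)
    also have "\<dots> \<longleftrightarrow> inv x \<otimes> (g \<otimes> x) \<in> H"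
      using subgroup.lcos_module_imp[OF H is_group x] subgroup.lcos_module_rev[OF H is_group x] g x
      by blast
    finally show ?thesis using g x by (simp add: m_assoc)
  qed
  show ?thesis
  proof (intro equalityI subsetI)
    fix g assume "g \<in> coset_stab G (x <# H)"
    then have g: "g \<in> carrier G" "inv x \<otimes> g \<otimes> x \<in> H"
      using fixes_iff by (auto simp: coset_stab_def)
    have "g = x \<otimes> (inv x \<otimes> g \<otimes> x) \<otimes> inv x"
      using g x by (simp add: m_assoc mult_inv_cancel_left)
    with g show "g \<in> (\<lambda>h. x \<otimes> h \<otimes> inv x) ` H" by blast
  next
    fix g assume "g \<in> (\<lambda>h. x \<otimes> h \<otimes> inv x) ` H"
    then obtain h where h: "h \<in> H" "g = x \<otimes> h \<otimes> inv x" by blast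
    then have "inv x \<otimes> g \<otimes> x = h" using x Hc by (auto simp: m_assoc inv_mult_cancel_left)
    moreover have "g \<in> carrier G" using h x Hc by auto
    ultimately show "g \<in> coset_stab G (x <# H)"
      using fixes_iff h(1) by (simp add: coset_stab_def)
  qed
qed

lemma (in group) conj_nat_pow:
  assumes "x \<in> carrier G" "h \<in> carrier G"
  shows "(x \<otimes> h \<otimes> inv x) [^] (n::nat) = x \<otimes> h [^] n \<otimes> inv x"
proof (induction n)
  case (Suc n)
  then show ?case using assms by (simp add: m_assoc inv_mult_cancel_left)
qed (use assms in \<open>simp add: m_assoc\<close>)

lemma (in group) subgroup_pow_card_eq_one:
  assumes "subgroup H G" "h \<in> H"
  shows "h [^] card H = \<one>"
proof -
  interpret H: group "G\<lparr>carrier := H\<rparr>" using subgroup.subgroup_is_group[OF assms(1) is_group] .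
  have "h [^]\<^bsub>G\<lparr>carrier := H\<rparr>\<^esub> card H = \<one>"
    using H.pow_order_eq_1[of h] assms(2) by (simp add: order_def)
  then show ?thesis using nat_pow_consistent[of h] by simp
qed

lemma (in group) subgroup_coset_stab:
  assumes "M \<subseteq> carrier G"
  shows "subgroup (coset_stab G M) G"
proof (rule subgroupI)
  show "coset_stab G M \<subseteq> carrier G" by (auto simp: coset_stab_def)
  show "coset_stab G M \<noteq> {}" using lcos_mult_one[OF assms] by (auto simp: coset_stab_def)
next
  fix g assume g: "g \<in> coset_stab G M"
  then have gc: "g \<in> carrier G" by (simp add: coset_stab_def)
  have "inv g <# M = inv g <# (g <# M)" using g by (simp add: coset_stab_def)
  also have "\<dots> = M" using gc by (simp add: lcos_m_assoc[OF assms] lcos_mult_one[OF assms])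
  finally show "inv g \<in> coset_stab G M" using gc by (simp add: coset_stab_def)
next
  fix g g' assume g: "g \<in> coset_stab G M" and g': "g' \<in> coset_stab G M"
  then have gc: "g \<in> carrier G" "g' \<in> carrier G" by (simp_all add: coset_stab_def)
  have "(g \<otimes> g') <# M = g <# (g' <# M)" using gc by (simp add: lcos_m_assoc[OF assms])
  also have "\<dots> = M" using g g' by (simp add: coset_stab_def)
  finally show "g \<otimes> g' \<in> coset_stab G M" using gc by (simp add: coset_stab_def)
qed

lemma (in group) coset_stab_pow_card_eq_one:
  assumes "subgroup H G" "v \<in> lcosets H" "g \<in> coset_stab G v"
  shows "g [^] card H = \<one>"
proof -
  obtain x where x: "x \<in> carrier G" and v: "v = x <# H" using assms(2) by (auto simp: LCOSETS_def)
  have "g \<in> (\<lambda>h. x \<otimes> h \<otimes> inv x) ` H" using assms(3) coset_stab_lcos[OF assms(1) x] v by simp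
  then obtain h where h: "h \<in> H" and g: "g = x \<otimes> h \<otimes> inv x" by blast
  have "h \<in> carrier G" using subgroup.mem_carrier[OF assms(1) h] .
  then have "g [^] card H = x \<otimes> h [^] card H \<otimes> inv x" using g x by (simp only: conj_nat_pow)
  then show ?thesis using x subgroup_pow_card_eq_one[OF assms(1) h] by simp
qed

lemma (in group) card_coset_stab:
  assumes "subgroup H G" "v \<in> lcosets H"
  shows "card (coset_stab G v) = card H"
proof -
  obtain x where x: "x \<in> carrier G" and v: "v = x <# H" using assms(2) by (auto simp: LCOSETS_def)
  have "inj_on (\<lambda>h. x \<otimes> h \<otimes> inv x) H"
    using x assms(1) subgroup.mem_carrier by (fastforce intro: inj_onI)
  then show ?thesis using coset_stab_lcos[OF assms(1) x] v by (simp add: card_image)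
qed

lemma (in group) intersecting_set_pow_card_eq_one:
  assumes "subgroup H G" "intersecting_set G H F" "g \<in> F" "g' \<in> F"
  shows "(inv g' \<otimes> g) [^] card H = \<one>"
proof -
  have F: "F \<subseteq> carrier G" using assms(2) by (simp add: intersecting_set_def)
  obtain v where v: "v \<in> lcosets H" and gv: "g <# v = g' <# v"
    using assms(2-4) unfolding intersecting_set_def by blast
  have vc: "v \<subseteq> carrier G" using subgroup.lcosets_carrier[OF assms(1) is_group v] .
  have gc: "g \<in> carrier G" "g' \<in> carrier G" using assms(3,4) F by auto
  have "(inv g' \<otimes> g) <# v = inv g' <# (g <# v)" using gc by (simp add: lcos_m_assoc[OF vc])
  also have "\<dots> = inv g' <# (g' <# v)" using gv by simp
  also have "\<dots> = v" using gc by (simp add: lcos_m_assoc[OF vc] lcos_mult_one[OF vc])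
  finally have "inv g' \<otimes> g \<in> coset_stab G v" using gc by (simp add: coset_stab_def)
  then show ?thesis using coset_stab_pow_card_eq_one[OF assms(1) v] by blast
qed

lemma (in group) intersecting_psupset_stabilizer_order_3_elements:
  assumes H: "subgroup H G" and card_H: "card H = 3" and F: "intersecting_set G H F"
    and v: "v \<in> lcosets H" and proper: "coset_stab G v \<subset> F"
  obtains u f where "u \<in> carrier G" "f \<in> carrier G"
    "\<forall>y \<in> {u, f, u \<otimes> f, u \<otimes> u \<otimes> f}. y \<noteq> \<one> \<and> y [^] (3::nat) = \<one>"
proof -
  let ?S = "coset_stab G v"
  have S: "subgroup ?S G"
    using subgroup_coset_stab subgroup.lcosets_carrier[OF H is_group v] by blast
  have "\<not> ?S \<subseteq> {\<one>}"
  proof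
    assume "?S \<subseteq> {\<one>}"
    then have "card ?S \<le> 1" using card_mono[of "{\<one>}" ?S] by simp
    then show False using card_coset_stab[OF H v] card_H by simp
  qed
  then obtain u where uS: "u \<in> ?S" and u1: "u \<noteq> \<one>" by blast
  obtain f where fF: "f \<in> F" and fS: "f \<notin> ?S" using proper by blast
  have uc: "u \<in> carrier G" using subgroup.mem_carrier[OF S uS] .
  have fc: "f \<in> carrier G" using fF F by (auto simp: intersecting_set_def)
  have shifted: "s \<otimes> f \<noteq> \<one> \<and> (s \<otimes> f) [^] (3::nat) = \<one>" if sS: "s \<in> ?S" for s
  proof
    have sc: "s \<in> carrier G" using subgroup.mem_carrier[OF S sS] .
    have "inv s \<in> F" using subgroup.m_inv_closed[OF S sS] proper by blast
    then show "(s \<otimes> f) [^] (3::nat) = \<one>"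
      using intersecting_set_pow_card_eq_one[OF H F fF, of "inv s"] sc card_H by simp
    show "s \<otimes> f \<noteq> \<one>"
    proof
      assume "s \<otimes> f = \<one>"
      then have "f = inv s" using inv_mult_cancel_left[OF sc fc] sc by simp
      then show False using fS subgroup.m_inv_closed[OF S sS] by simp
    qed
  qed
  have "u [^] (3::nat) = \<one>" using coset_stab_pow_card_eq_one[OF H v uS] card_H by simp
  moreover have "\<one> \<otimes> f = f" "(u \<otimes> u) \<otimes> f = u \<otimes> u \<otimes> f" using fc by simp_all
  ultimately have "\<forall>y \<in> {u, f, u \<otimes> f, u \<otimes> u \<otimes> f}. y \<noteq> \<one> \<and> y [^] (3::nat) = \<one>"
    using u1 shifted uS subgroup.one_closed[OF S] subgroup.m_closed[OF S uS uS] by (metis insert_iff empty_iff)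
  then show thesis using that uc fc by blast
qed

lemma trace_2: "trace (A::'a::comm_semiring_1^2^2) = A$1$1 + A$2$2"
  by (simp add: trace_def sum_2)

lemma matrix_mult_2_nth:
  "((A::'a::comm_semiring_1^2^2) ** B)$i$j = A$i$1 * B$1$j + A$i$2 * B$2$j"
  by (simp add: matrix_matrix_mult_def sum_2)

text \<open>Cayley--Hamilton: \<open>A\<^sup>2 = tr A \<cdot> A - I\<close> when \<open>det A = 1\<close>.\<close>

lemma cube_nth_if_det_eq_1:
  fixes A :: "'a::idom^2^2"
  assumes "det A = 1"
  shows "(A ** A ** A)$i$j = (trace A ^ 2 - 1) * A$i$j - (if i = j then trace A else 0)"
proof -
  have det: "A$1$1 * A$2$2 - A$1$2 * A$2$1 = 1" using assms by (simp add: det_2)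
  have "(A ** A ** A)$1$1 = (trace A ^ 2 - 1) * A$1$1 - trace A"
    "(A ** A ** A)$2$2 = (trace A ^ 2 - 1) * A$2$2 - trace A"
    "(A ** A ** A)$1$2 = (trace A ^ 2 - 1) * A$1$2"
    "(A ** A ** A)$2$1 = (trace A ^ 2 - 1) * A$2$1"
    using det unfolding trace_2 matrix_mult_2_nth by Groebner_Basis.algebra+
  then show ?thesis using exhaust_2[of i] exhaust_2[of j] by auto
qed

lemma trace_square_eq_1_if_cube_in_plus_minus_I:
  fixes A :: "'a::field^2^2"
  assumes det: "det A = 1" and cube: "A ** A ** A \<in> {mat 1, - mat 1}"
    and nontriv: "A \<notin> {mat 1, - mat 1}"
  shows "trace A ^ 2 = 1"
proof (rule ccontr)
  assume "trace A ^ 2 \<noteq> 1"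
  then have nz: "trace A ^ 2 - 1 \<noteq> 0" by simp
  have "- mat 1 = (mat (-1) :: 'a^2^2)" by (simp add: vec_eq_iff mat_def)
  then obtain e :: 'a where "e = 1 \<or> e = -1" and "A ** A ** A = mat e"
    using cube by auto
  then have "(trace A ^ 2 - 1) * A$i$j = (if i = j then e + trace A else 0)" for i j
    using cube_nth_if_det_eq_1[OF det, of i j] by (auto simp: mat_def algebra_simps)
  from this[of 1 2] this[of 2 1] this[of 1 1] this[of 2 2]
  have off: "A$1$2 = 0" "A$2$1 = 0" and diag: "A$1$1 = A$2$2"
    using nz mult_left_cancel[OF nz, of "A$1$1" "A$2$2"] by auto
  have "A$1$1 * A$1$1 = 1" using det off diag by (simp add: det_2)
  then have "A$1$1 = 1 \<or> A$1$1 = -1" by (simp add: square_eq_1_iff)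
  then have "A \<in> {mat 1, - mat 1}" using off diag by (auto simp: vec_eq_iff forall_2 mat_def)
  with nontriv show False by simp
qed

lemma trace_mult_square_if_det_eq_1:
  fixes W X :: "'a::idom^2^2"
  assumes "det W = 1"
  shows "trace (W ** W ** X) = trace W * trace (W ** X) - trace X"
  using assms unfolding trace_2 matrix_mult_2_nth det_2 by Groebner_Basis.algebra

lemma three_eq_0_if_squares_eq_1:
  fixes t a b :: "'a::idom"
  assumes "t^2 = 1" "a^2 = 1" "b^2 = 1" "(t * b - a)^2 = 1"
  shows "(3::'a) = 0"
proof -
  have "(t * b - a)^2 = t^2 * b^2 - 2 * (t * a * b) + a^2" by (simp add: power2_eq_square algebra_simps)
  then have tab: "2 * (t * a * b) = 1" using assms by simp
  have "(2 * (t * a * b))^2 = 4 * (t^2 * a^2 * b^2)" by (simp add: power2_eq_square algebra_simps)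
  then have four: "(4::'a) = 1" using tab assms by simp
  have "(3::'a) = 4 - 1" by simp
  also have "\<dots> = 0" using four by simp
  finally show ?thesis .
qed

abbreviation plus_minus_I :: "('a::field^2^2) set" where
  "plus_minus_I \<equiv> {mat 1, - mat 1}"

lemma SL2_simps [simp]:
  "carrier SL2 = {A. det A = 1}" "mult SL2 = (**)" "one SL2 = mat 1"
  by (simp_all add: SL2_def)

lemma group_SL2: "group (SL2 :: ('a::field^2^2) monoid)"
proof (rule groupI)
  fix A :: "'a^2^2" assume A: "A \<in> carrier SL2"
  then have "invertible A" by (simp add: invertible_det_nz)
  then obtain B where B: "B ** A = mat 1" by (auto simp: invertible_def)
  then have "det B * det A = 1" by (metis det_I det_mul)
  with A have "det B = 1" by simp
  with B show "\<exists>B\<in>carrier SL2. B \<otimes>\<^bsub>SL2\<^esub> A = \<one>\<^bsub>SL2\<^esub>" by auto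
qed (auto simp: det_mul matrix_mul_assoc)

lemma normal_plus_minus_I: "plus_minus_I \<lhd> (SL2 :: ('a::field^2^2) monoid)"
proof -
  interpret SL2: group "SL2 :: ('a^2^2) monoid" by (rule group_SL2)
  have neg_central: "A ** (- mat 1) = (- mat 1) ** A" for A :: "'a^2^2"
    by (simp add: vec_eq_iff forall_2 matrix_mult_2_nth mat_def)
  have neg_square: "(- mat 1 :: 'a^2^2) ** (- mat 1) = mat 1"
    by (simp add: vec_eq_iff forall_2 matrix_mult_2_nth mat_def)
  have det_neg: "det (- mat 1 :: 'a^2^2) = 1" by (simp add: det_2 mat_def)
  have "inv\<^bsub>SL2\<^esub> (- mat 1) = (- mat 1 :: 'a^2^2)"
    by (rule SL2.inv_equality) (auto simp: neg_square det_neg)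
  then have "subgroup (plus_minus_I :: ('a^2^2) set) SL2"
    by (intro SL2.subgroupI) (auto simp: det_neg neg_square SL2.inv_one[simplified])
  moreover have "A ** B ** inv\<^bsub>SL2\<^esub> A \<in> plus_minus_I"
    if "A \<in> carrier SL2" "B \<in> plus_minus_I" for A B :: "'a^2^2"
  proof -
    have "A ** (- mat 1) ** inv\<^bsub>SL2\<^esub> A = (- mat 1) ** (A ** inv\<^bsub>SL2\<^esub> A)"
      by (simp add: neg_central matrix_mul_assoc)
    then show ?thesis using SL2.r_inv[OF that(1)] that(2) by auto
  qed
  ultimately show ?thesis by (auto simp: SL2.normal_inv_iff)
qed

lemma group_PSL2: "group (PSL2 :: ('a::field^2^2) set monoid)"
  unfolding PSL2_def by (rule normal.factorgroup_is_group[OF normal_plus_minus_I])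

lemma carrier_PSL2:
  "carrier (PSL2 :: ('a::field^2^2) set monoid) = (\<lambda>A. plus_minus_I #>\<^bsub>SL2\<^esub> A) ` {A. det A = 1}"
  unfolding PSL2_def carrier_FactGroup by simp

lemma one_PSL2: "\<one>\<^bsub>PSL2\<^esub> = (plus_minus_I :: ('a::field^2^2) set)"
  unfolding PSL2_def by simp

lemma mult_PSL2:
  fixes A B :: "'a::field^2^2"
  assumes "det A = 1" "det B = 1"
  shows "(plus_minus_I #>\<^bsub>SL2\<^esub> A) \<otimes>\<^bsub>PSL2\<^esub> (plus_minus_I #>\<^bsub>SL2\<^esub> B) = plus_minus_I #>\<^bsub>SL2\<^esub> (A ** B)"
  unfolding PSL2_def using normal.rcos_sum[OF normal_plus_minus_I, of A B] assms by simp

lemma nat_pow_3_PSL2: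
  fixes A :: "'a::field^2^2"
  assumes "det A = 1"
  shows "(plus_minus_I #>\<^bsub>SL2\<^esub> A) [^]\<^bsub>PSL2\<^esub> (3::nat) = plus_minus_I #>\<^bsub>SL2\<^esub> (A ** A ** A)"
proof -
  interpret PSL2: group "PSL2 :: ('a^2^2) set monoid" by (rule group_PSL2)
  have "plus_minus_I #>\<^bsub>SL2\<^esub> A \<in> carrier PSL2" using assms by (simp add: carrier_PSL2)
  then show ?thesis using assms by (simp add: numeral_3_eq_3 mult_PSL2 det_mul)
qed

lemma rcos_plus_minus_I_eq_one_iff:
  fixes A :: "'a::field^2^2"
  assumes "det A = 1"
  shows "plus_minus_I #>\<^bsub>SL2\<^esub> A = \<one>\<^bsub>PSL2\<^esub> \<longleftrightarrow> A \<in> plus_minus_I"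
proof -
  interpret SL2: group "SL2 :: ('a^2^2) monoid" by (rule group_SL2)
  have sub: "subgroup (plus_minus_I :: ('a^2^2) set) SL2"
    using normal_plus_minus_I normal_imp_subgroup by blast
  have "A \<in> plus_minus_I #>\<^bsub>SL2\<^esub> A" using SL2.rcos_self[OF _ sub] assms by simp
  then show ?thesis
    using subgroup.rcos_const[OF sub group_SL2] by (auto simp: one_PSL2)
qed

lemma trace_square_eq_1_if_PSL2_order_3:
  fixes A :: "'a::field^2^2"
  assumes "det A = 1" "plus_minus_I #>\<^bsub>SL2\<^esub> A \<noteq> \<one>\<^bsub>PSL2\<^esub>"
    "(plus_minus_I #>\<^bsub>SL2\<^esub> A) [^]\<^bsub>PSL2\<^esub> (3::nat) = \<one>\<^bsub>PSL2\<^esub>"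
  shows "trace A ^ 2 = 1"
proof (rule trace_square_eq_1_if_cube_in_plus_minus_I)
  show "A \<notin> plus_minus_I" using assms(1,2) rcos_plus_minus_I_eq_one_iff by blast
  show "A ** A ** A \<in> plus_minus_I"
    using assms rcos_plus_minus_I_eq_one_iff[of "A ** A ** A"] by (simp add: nat_pow_3_PSL2 det_mul)
qed (rule assms(1))

lemma three_eq_0_if_PSL2_order_3_elements:
  fixes u f :: "('a::field^2^2) set"
  assumes "u \<in> carrier PSL2" "f \<in> carrier PSL2"
    and order_3: "\<forall>y \<in> {u, f, u \<otimes>\<^bsub>PSL2\<^esub> f, u \<otimes>\<^bsub>PSL2\<^esub> u \<otimes>\<^bsub>PSL2\<^esub> f}.
      y \<noteq> \<one>\<^bsub>PSL2\<^esub> \<and> y [^]\<^bsub>PSL2\<^esub> (3::nat) = \<one>\<^bsub>PSL2\<^esub>"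
  shows "(3::'a) = 0"
proof -
  obtain W X :: "'a^2^2" where W: "det W = 1" "u = plus_minus_I #>\<^bsub>SL2\<^esub> W"
    and X: "det X = 1" "f = plus_minus_I #>\<^bsub>SL2\<^esub> X"
    using assms(1,2) by (auto simp: carrier_PSL2)
  have prods: "u \<otimes>\<^bsub>PSL2\<^esub> f = plus_minus_I #>\<^bsub>SL2\<^esub> (W ** X)"
    "u \<otimes>\<^bsub>PSL2\<^esub> u \<otimes>\<^bsub>PSL2\<^esub> f = plus_minus_I #>\<^bsub>SL2\<^esub> (W ** W ** X)"
    using W X by (simp_all add: mult_PSL2 det_mul)
  have trace: "trace M ^ 2 = 1"
    if "det M = 1" "plus_minus_I #>\<^bsub>SL2\<^esub> M \<in> {u, f, u \<otimes>\<^bsub>PSL2\<^esub> f, u \<otimes>\<^bsub>PSL2\<^esub> u \<otimes>\<^bsub>PSL2\<^esub> f}"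
    for M
    using trace_square_eq_1_if_PSL2_order_3[OF that(1)] bspec[OF order_3 that(2)] by blast
  have "trace W ^ 2 = 1" "trace X ^ 2 = 1" "trace (W ** X) ^ 2 = 1"
    "(trace W * trace (W ** X) - trace X) ^ 2 = 1"
    using trace[of W] trace[of X] trace[of "W ** X"] trace[of "W ** W ** X"] W X prods
    by (simp_all add: det_mul trace_mult_square_if_det_eq_1)
  then show ?thesis by (rule three_eq_0_if_squares_eq_1)
qed

lemma three_neq_0_if_card_prime_power:
  assumes "prime p" "p \<noteq> 3" "CARD('a::{ring_1,finite}) = p ^ k"
  shows "(3::'a) \<noteq> 0"
proof
  assume "(3::'a) = 0"
  then have "CHAR('a) dvd 3" using of_nat_eq_0_iff_char_dvd[where 'a='a, of 3] by simp
  moreover have "CHAR('a) \<noteq> 1" "prime (3::nat)" by simp_all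
  ultimately have "CHAR('a) = 3" by (metis prime_nat_iff)
  then have "3 dvd p ^ k" using CHAR_dvd_CARD[where 'a='a] assms(3) by simp
  then have "3 dvd p" using prime_dvd_power[OF \<open>prime (3::nat)\<close>] by blast
  then show False using assms(1,2) primes_dvd_imp_eq[OF \<open>prime (3::nat)\<close>] by blast
qed

theorem proposition2p13:
  fixes H :: "('a::{field,finite} ^ 2 ^ 2) set set"
    and F :: "('a ^ 2 ^ 2) set set"
    and p k :: nat
  assumes "prime p" and "p \<noteq> 3" and "k \<ge> 1"
    and "CARD('a) = p ^ k"
    and "subgroup H PSL2" and "card H = 3"
    and "basic_intersecting_set PSL2 H F"
    and "\<not> canonical_intersecting_set PSL2 H F"
  shows "\<not> (\<exists>v \<in> lcosets\<^bsub>PSL2\<^esub> H. coset_stab PSL2 v \<subset> F)"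
proof
  assume "\<exists>v \<in> lcosets\<^bsub>PSL2\<^esub> H. coset_stab PSL2 v \<subset> F"
  then obtain v where v: "v \<in> lcosets\<^bsub>PSL2\<^esub> H" and proper: "coset_stab PSL2 v \<subset> F" by blast
  interpret PSL2: group "PSL2 :: ('a^2^2) set monoid" by (rule group_PSL2)
  have F: "intersecting_set PSL2 H F" using assms(7) by (simp add: basic_intersecting_set_def)
  obtain u f :: "('a^2^2) set" where "u \<in> carrier PSL2" "f \<in> carrier PSL2"
    "\<forall>y \<in> {u, f, u \<otimes>\<^bsub>PSL2\<^esub> f, u \<otimes>\<^bsub>PSL2\<^esub> u \<otimes>\<^bsub>PSL2\<^esub> f}.
      y \<noteq> \<one>\<^bsub>PSL2\<^esub> \<and> y [^]\<^bsub>PSL2\<^esub> (3::nat) = \<one>\<^bsub>PSL2\<^esub>"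
    by (rule PSL2.intersecting_psupset_stabilizer_order_3_elements[OF assms(5,6) F v proper])
  then have "(3::'a) = 0" by (rule three_eq_0_if_PSL2_order_3_elements)
  with three_neq_0_if_card_prime_power[OF assms(1,2,4)] show False by contradiction
qed

end
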